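(* There exists a constant $c>0$ such that for $\mathbb{P}$-almost every $\omega\in\Omega$, for every light-rectangle $R\subseteq\mathbb{R}^2$ and every $Y>0$, $$\limsup_{n\to\infty}\ \sup_{y\in\llbracket -nY,nY\rrbracket}\frac1n L^{\uparrow}(\omega_y\cap nR)\le c\sqrt{\mathrm{Leb}(R)},$$ where $\mathrm{Leb}(R)$ is the area of $R$.
   Context: $\Omega$ is the set of locally finite subsets of $\mathbb{R}\times\mathbb{Z}\times\mathbb{R}_+$ with $\mathbb{P}$ the law of a Poisson point process of intensity $2$ (Lebesgue $\times$ counting $\times$ Lebesgue). For $y\in\mathbb{Z}$, $\omega_y=\{(x,t)\in\mathbb{R}^2:(x,y,t)\in\omega\}$. A light-rectangle is a closed rectangle in $\mathbb{R}^2$ whose sides are parallel to the lines $t=x$ or $t=-x$; $nR$ is its dilation by $n$. For a finite $A\subseteq\mathbb{R}^2$, $L^\uparrow(A)$ is the maximal number of points of $A$ visited by a light-path, i.e. a continuous $\gamma:[0,1]\to\mathbb{R}^2$ with $\gamma(b)-\gamma(a)\in\{(x,t):|x|\le t\}$ whenever $0\le a\le b\le1$. $\llbracket a,b\rrbracket$ denotes the integers in $[a,b]$. *)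

theory Defs
  imports "HOL-Probability.Probability"
begin

text \<open>Points of the process live in R x Z x R_+ ; a point is (x, y, t).\<close>

definition pp_bounded :: "(real \<times> int \<times> real) set \<Rightarrow> bool" where
  "pp_bounded B \<longleftrightarrow> (\<exists>r::real. \<forall>p\<in>B.
      \<bar>fst p\<bar> \<le> r \<and> \<bar>real_of_int (fst (snd p))\<bar> \<le> r \<and> \<bar>snd (snd p)\<bar> \<le> r)"

definition PPP_space :: "(real \<times> int \<times> real) set set" where
  "PPP_space = {\<omega>. \<omega> \<subseteq> UNIV \<times> UNIV \<times> {0..} \<and>
      (\<forall>B. pp_bounded B \<longrightarrow> finite (\<omega> \<inter> B))}"

definition pp_intensity :: "(real \<times> int \<times> real) set \<Rightarrow> ennreal" where
  "pp_intensity B = 2 * (\<integral>\<^sup>+ y. emeasure lborel {p :: real \<times> real. (fst p, y, snd p) \<in> B \<and> 0 \<le> snd p}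
                           \<partial>count_space UNIV)"

definition poisson_pp :: "(real \<times> int \<times> real) set measure \<Rightarrow> bool" where
  "poisson_pp P \<longleftrightarrow>
     prob_space P \<and> space P = PPP_space \<and>
     sets P = sigma_sets PPP_space
        {{\<omega>\<in>PPP_space. card (\<omega> \<inter> B) = k} | B k. B \<in> sets borel \<and> pp_bounded B} \<and>
     (\<forall>B k. B \<in> sets borel \<and> pp_bounded B \<longrightarrow>
        measure P {\<omega>\<in>space P. card (\<omega> \<inter> B) = k}
          = enn2real (pp_intensity B) ^ k / fact k * exp (- enn2real (pp_intensity B))) \<and>
     (\<forall>(I :: nat set) Bs. finite I \<longrightarrow> (\<forall>i\<in>I. Bs i \<in> sets borel \<and> pp_bounded (Bs i)) \<longrightarrow>
        disjoint_family_on Bs I \<longrightarrow>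
        prob_space.indep_vars P (\<lambda>_. count_space UNIV) (\<lambda>i \<omega>. card (\<omega> \<inter> Bs i)) I)"

definition slice :: "(real \<times> int \<times> real) set \<Rightarrow> int \<Rightarrow> (real \<times> real) set" where
  "slice \<omega> y = {(x, t). (x, y, t) \<in> \<omega>}"

definition light_path :: "(real \<Rightarrow> real \<times> real) \<Rightarrow> bool" where
  "light_path \<gamma> \<longleftrightarrow> continuous_on {0..1} \<gamma> \<and>
     (\<forall>a b. 0 \<le> a \<and> a \<le> b \<and> b \<le> 1 \<longrightarrow>
        \<bar>fst (\<gamma> b) - fst (\<gamma> a)\<bar> \<le> snd (\<gamma> b) - snd (\<gamma> a))"

definition Lup :: "(real \<times> real) set \<Rightarrow> nat" where
  "Lup A = Max {card (A \<inter> \<gamma> ` {0..1}) | \<gamma>. light_path \<gamma>}"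

text \<open>Light-rectangle: closed rectangle with sides parallel to t = x and t = -x
  (coordinates (x, t)).\<close>
definition light_rect :: "(real \<times> real) set \<Rightarrow> bool" where
  "light_rect R \<longleftrightarrow> (\<exists>a b c d. a < b \<and> c < d \<and>
     R = {p. a \<le> snd p - fst p \<and> snd p - fst p \<le> b \<and> c \<le> snd p + fst p \<and> snd p + fst p \<le> d})"

definition dilate :: "real \<Rightarrow> (real \<times> real) set \<Rightarrow> (real \<times> real) set" where
  "dilate n R = (\<lambda>p. n *\<^sub>R p) ` R"

end

theory Submission
  imports Defs
begin

(* In the light-cone coordinates u = t - x, v = t + x the points of a light path form a chain
   for the product order. Cut the dilated light-box with sides n(b - a), n(d - c) into an M x M
   grid, M ~ n s where s = sqrt((b - a)(d - c)). The cells met by a light path lie on one of at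
   most 4^M staircases (monotone lattice paths), each of area at most n s, so the Poisson tail
   bound makes 16 n s points on a given staircase an event of probability at most 2^(-16 n s).
   A union bound over staircases and the O(n) layers y is summable in n, so Borel-Cantelli
   gives the bound almost surely for every rational light-box at once, and every
   light-rectangle R is covered by a rational light-box with s <= 2 sqrt(Leb R). *)

section \<open>Light-boxes\<close>

definition light_box :: "real \<Rightarrow> real \<Rightarrow> real \<Rightarrow> real \<Rightarrow> (real \<times> real) set" where
  "light_box a b c d =
     {p. a \<le> snd p - fst p \<and> snd p - fst p \<le> b \<and> c \<le> snd p + fst p \<and> snd p + fst p \<le> d}"

definition light_coords :: "real \<times> real \<Rightarrow> real \<times> real" where
  "light_coords p = (snd p - fst p, snd p + fst p)"

lemma light_rect_iff_light_box:
  "light_rect R \<longleftrightarrow> (\<exists>a b c d. a < b \<and> c < d \<and> R = light_box a b c d)"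
  unfolding light_rect_def light_box_def ..

lemma closed_light_box: "closed (light_box a b c d)"
  unfolding light_box_def by (intro closed_Collect_conj closed_Collect_le continuous_intros)

lemma bounded_light_box: "bounded (light_box a b c d)"
proof -
  have "norm p \<le> \<bar>a\<bar> + \<bar>b\<bar> + \<bar>c\<bar> + \<bar>d\<bar>" if "p \<in> light_box a b c d" for p
  proof -
    have "\<bar>fst p\<bar> + \<bar>snd p\<bar> \<le> \<bar>a\<bar> + \<bar>b\<bar> + \<bar>c\<bar> + \<bar>d\<bar>"
      using that unfolding light_box_def by auto
    with norm_Pair_le[of "fst p" "snd p"] show ?thesis by simp
  qed
  then show ?thesis unfolding bounded_iff by blast
qed

lemma light_box_borel [measurable]: "light_box a b c d \<in> sets borel"
  using closed_light_box by (rule borel_closed)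

lemma emeasure_light_box:
  assumes "a \<le> b" "c \<le> d"
  shows "emeasure lborel (light_box a b c d) = ennreal ((b - a) * (d - c) / 2)"
proof -
  let ?R = "light_box a b c d"
  have "emeasure lborel ?R = (\<integral>\<^sup>+p. indicator ?R p \<partial>(lborel \<Otimes>\<^sub>M lborel))"
    by (simp add: lborel_prod)
  also have "\<dots> = (\<integral>\<^sup>+x. (\<integral>\<^sup>+t. indicator ?R (x, t) \<partial>lborel) \<partial>lborel)"
    by (subst lborel.nn_integral_fst[symmetric]) (auto simp: lborel_prod)
  also have "\<dots> = (\<integral>\<^sup>+x. (\<integral>\<^sup>+u. indicator {a..b} u * indicator {(c - u)/2..(d - u)/2} x \<partial>lborel) \<partial>lborel)"
  proof (rule nn_integral_cong)
    fix x :: real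
    \<comment> \<open>substitute \<open>t = x + u\<close>, so that \<open>u\<close> is the first light coordinate\<close>
    have "(\<integral>\<^sup>+t. indicator ?R (x, t) \<partial>lborel) = (\<integral>\<^sup>+u. indicator ?R (x, x + 1 * u) \<partial>lborel)"
      using nn_integral_real_affine[of "\<lambda>t. indicator ?R (x, t)" 1 x] by simp
    also have "\<dots> = (\<integral>\<^sup>+u. indicator {a..b} u * indicator {(c - u)/2..(d - u)/2} x \<partial>lborel)"
      by (intro nn_integral_cong) (auto simp: light_box_def indicator_def)
    finally show "(\<integral>\<^sup>+t. indicator ?R (x, t) \<partial>lborel) = \<dots>" .
  qed
  also have "\<dots> = (\<integral>\<^sup>+u. (\<integral>\<^sup>+x. indicator {a..b} u * indicator {(c - u)/2..(d - u)/2} x \<partial>lborel) \<partial>lborel)"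
    by (rule lborel_pair.Fubini'[symmetric]) (measurable, unfold atLeastAtMost_iff, measurable)
  also have "\<dots> = (\<integral>\<^sup>+u. ennreal ((d - c) / 2) * indicator {a..b} u \<partial>lborel)"
    using assms by (intro nn_integral_cong) (simp add: nn_integral_cmult field_simps)
  also have "\<dots> = ennreal ((d - c) / 2) * emeasure lborel {a..b}"
    by (rule nn_integral_cmult_indicator) simp
  also have "\<dots> = ennreal ((b - a) * (d - c) / 2)"
    using assms by (simp add: ennreal_mult[symmetric] field_simps)
  finally show ?thesis .
qed

lemma light_box_mono:
  "a \<le> a' \<Longrightarrow> b' \<le> b \<Longrightarrow> c \<le> c' \<Longrightarrow> d' \<le> d \<Longrightarrow> light_box a' b' c' d' \<subseteq> light_box a b c d"
  unfolding light_box_def by auto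

lemma dilate_light_box_subset:
  assumes "0 \<le> n" "a' \<le> a" "b \<le> b'" "c' \<le> c" "d \<le> d'"
  shows "dilate n (light_box a b c d) \<subseteq> light_box (n * a') (n * b') (n * c') (n * d')"
proof
  fix q assume "q \<in> dilate n (light_box a b c d)"
  then obtain x t where p: "(x, t) \<in> light_box a b c d" "q = (n * x, n * t)"
    unfolding dilate_def by (auto simp: scaleR_prod_def)
  then have "n * a' \<le> n * (t - x)" "n * (t - x) \<le> n * b'" "n * c' \<le> n * (t + x)" "n * (t + x) \<le> n * d'"
    using assms by (auto intro!: mult_left_mono simp: light_box_def)
  then show "q \<in> light_box (n * a') (n * b') (n * c') (n * d')"
    using p unfolding light_box_def by (auto simp: algebra_simps)
qed

lemma rational_enclosure:
  fixes a b :: real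
  assumes "a < b"
  obtains p q :: rat where "of_rat p \<le> a" "b \<le> of_rat q" "of_rat q - of_rat p \<le> 4/3 * (b - a)"
proof -
  obtain p where p: "a - (b - a) / 6 < of_rat p" "of_rat p < a"
    using of_rat_dense[of "a - (b - a) / 6" a] assms by auto
  obtain q where q: "b < of_rat q" "of_rat q < b + (b - a) / 6"
    using of_rat_dense[of b "b + (b - a) / 6"] assms by auto
  have "of_rat q - of_rat p \<le> 4/3 * (b - a)"
    using p q by (simp add: field_simps)
  with p q show thesis using that[of p q] by linarith
qed

lemma light_rect_rational_cover:
  assumes "light_rect R"
  obtains a b c d :: rat where "a < b" "c < d"
    "\<And>n. 0 \<le> n \<Longrightarrow> dilate n R \<subseteq> light_box (n * of_rat a) (n * of_rat b) (n * of_rat c) (n * of_rat d)"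
    "sqrt ((of_rat b - of_rat a) * (of_rat d - of_rat c)) \<le> 2 * sqrt (measure lborel R)"
proof -
  obtain a b c d where ab: "a < b" and cd: "c < d" and R: "R = light_box a b c d"
    using assms unfolding light_rect_iff_light_box by blast
  obtain a' b' where ab': "of_rat a' \<le> a" "b \<le> of_rat b'" "of_rat b' - of_rat a' \<le> 4/3 * (b - a)"
    using rational_enclosure[OF ab] .
  obtain c' d' where cd': "of_rat c' \<le> c" "d \<le> of_rat d'" "of_rat d' - of_rat c' \<le> 4/3 * (d - c)"
    using rational_enclosure[OF cd] .
  have lt: "a' < b'" "c' < d'"
    using ab ab' cd cd' by (simp_all flip: of_rat_less[where 'a = real])
  have "(of_rat b' - of_rat a') * (of_rat d' - of_rat c') \<le> (4/3 * (b - a)) * (4/3 * (d - c))"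
    using ab ab' cd cd' by (intro mult_mono) auto
  also have "\<dots> = 16/9 * ((b - a) * (d - c))"
    by (simp add: field_simps)
  also have "\<dots> \<le> 2 ^ 2 * ((b - a) * (d - c) / 2)"
    using mult_pos_pos[of "b - a" "d - c"] ab cd by simp
  also have "(b - a) * (d - c) / 2 = measure lborel R"
    using ab cd by (simp add: R measure_def emeasure_light_box)
  finally have "sqrt ((of_rat b' - of_rat a') * (of_rat d' - of_rat c')) \<le> sqrt (2 ^ 2 * measure lborel R)"
    by (rule real_sqrt_le_mono)
  then show thesis
    using that[OF lt] dilate_light_box_subset ab' cd' by (simp add: R real_sqrt_mult)
qed

section \<open>Longest light paths\<close>

lemma light_path_light_coords_mono:
  assumes "light_path \<gamma>" "0 \<le> a" "a \<le> b" "b \<le> 1"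
  shows "light_coords (\<gamma> a) \<le> light_coords (\<gamma> b)"
proof -
  have "\<bar>fst (\<gamma> b) - fst (\<gamma> a)\<bar> \<le> snd (\<gamma> b) - snd (\<gamma> a)"
    using assms unfolding light_path_def by blast
  then show ?thesis
    unfolding light_coords_def less_eq_prod_def by (simp add: abs_le_iff)
qed

lemma chain_light_coords_light_path:
  assumes "light_path \<gamma>"
  shows "Complete_Partial_Order.chain (\<le>) (light_coords ` \<gamma> ` {0..1})"
proof (unfold chain_def, intro ballI)
  fix p q assume "p \<in> light_coords ` \<gamma> ` {0..1}" "q \<in> light_coords ` \<gamma> ` {0..1}"
  then obtain a b where "a \<in> {0..1}" "b \<in> {0..1}" "p = light_coords (\<gamma> a)" "q = light_coords (\<gamma> b)"
    by blast
  then show "p \<le> q \<or> q \<le> p"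
    using light_path_light_coords_mono[OF assms] by (cases "a \<le> b") auto
qed

lemma light_path_const: "light_path (\<lambda>_. p)"
  unfolding light_path_def by simp

lemma finite_light_path_counts:
  assumes "finite A"
  shows "finite {card (A \<inter> \<gamma> ` {0..1}) | \<gamma>. light_path \<gamma>}"
proof (rule finite_subset)
  show "{card (A \<inter> \<gamma> ` {0..1}) | \<gamma>. light_path \<gamma>} \<subseteq> {..card A}"
    using card_mono[OF assms Int_lower1] by blast
qed simp

lemma card_le_Lup:
  assumes "finite A" "light_path \<gamma>"
  shows "card (A \<inter> \<gamma> ` {0..1}) \<le> Lup A"
  unfolding Lup_def
  by (rule Max_ge[OF finite_light_path_counts[OF assms(1)]]) (use assms(2) in blast)

lemma Lup_attained:
  assumes "finite A"
  obtains \<gamma> where "light_path \<gamma>" "Lup A = card (A \<inter> \<gamma> ` {0..1})"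
proof -
  have "Lup A \<in> {card (A \<inter> \<gamma> ` {0..1}) | \<gamma>. light_path \<gamma>}"
    unfolding Lup_def using finite_light_path_counts[OF assms] light_path_const
    by (intro Max_in) blast+
  then show thesis using that by blast
qed

lemma Lup_mono:
  assumes "A \<subseteq> B" "finite B"
  shows "Lup A \<le> Lup B"
proof -
  obtain \<gamma> where \<gamma>: "light_path \<gamma>" "Lup A = card (A \<inter> \<gamma> ` {0..1})"
    using Lup_attained finite_subset[OF assms] by blast
  have "card (A \<inter> \<gamma> ` {0..1}) \<le> card (B \<inter> \<gamma> ` {0..1})"
    using assms by (intro card_mono) auto
  also have "\<dots> \<le> Lup B"
    by (rule card_le_Lup[OF assms(2) \<gamma>(1)])
  finally show ?thesis using \<gamma>(2) by simp
qed

section \<open>Staircases\<close>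

text \<open>A set \<open>T \<subseteq> {..<2*M}\<close> encodes a monotone lattice path from \<open>(0, 0)\<close> whose
  \<open>k\<close>-th step increases the first coordinate iff \<open>k \<in> T\<close>; its staircase is the set of lattice
  points of \<open>{..<M} \<times> {..<M}\<close> that the path visits.\<close>

definition staircase :: "nat \<Rightarrow> nat set \<Rightarrow> (nat \<times> nat) set" where
  "staircase M T = {(i, j). i < M \<and> j < M \<and> card (T \<inter> {..<i + j}) = i}"

lemma staircase_subset_image:
  "staircase M T \<subseteq> (\<lambda>k. (card (T \<inter> {..<k}), k - card (T \<inter> {..<k}))) ` {..<2 * M}"
proof
  fix p assume "p \<in> staircase M T"
  then obtain i j where "p = (i, j)" "i < M" "j < M" "card (T \<inter> {..<i + j}) = i"
    unfolding staircase_def by auto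
  then show "p \<in> (\<lambda>k. (card (T \<inter> {..<k}), k - card (T \<inter> {..<k}))) ` {..<2 * M}"
    by (intro image_eqI[of _ _ "i + j"]) auto
qed

lemma finite_staircase: "finite (staircase M T)"
  using staircase_subset_image by (rule finite_subset) simp

lemma card_staircase_le: "card (staircase M T) \<le> 2 * M"
proof -
  have "card (staircase M T)
      \<le> card ((\<lambda>k. (card (T \<inter> {..<k}), k - card (T \<inter> {..<k}))) ` {..<2 * M})"
    by (intro card_mono staircase_subset_image) simp
  also have "\<dots> \<le> 2 * M"
    using card_image_le[of "{..<2 * M}"] by simp
  finally show ?thesis .
qed

lemma card_up_steps:
  fixes F :: "nat \<Rightarrow> nat"
  assumes "F 0 = 0" and "\<And>k. F (Suc k) = F k \<or> F (Suc k) = Suc (F k)" and "k \<le> L"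
  shows "card ({k. k < L \<and> F (Suc k) = Suc (F k)} \<inter> {..<k}) = F k"
  using assms(3)
proof (induction k)
  case 0
  then show ?case using assms(1) by simp
next
  case (Suc k)
  let ?T = "{k. k < L \<and> F (Suc k) = Suc (F k)}"
  have split: "?T \<inter> {..<Suc k} = (?T \<inter> {..<k}) \<union> (if k \<in> ?T then {k} else {})"
    by (auto simp: less_Suc_eq)
  show ?case
  proof (cases "k \<in> ?T")
    case True
    then show ?thesis using Suc by (simp add: split)
  next
    case False
    then have "F (Suc k) = F k" using assms(2)[of k] Suc.prems by auto
    then show ?thesis using Suc False by (simp add: split)
  qed
qed

lemma Max_image_mono:
  fixes f g :: "'a \<Rightarrow> 'b::linorder"
  assumes "finite A" "A \<noteq> {}" "\<And>x. x \<in> A \<Longrightarrow> f x \<le> g x"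
  shows "Max (f ` A) \<le> Max (g ` A)"
  using assms by (subst Max_le_iff) (auto intro: order_trans[OF _ Max_ge])

lemma chain_subset_staircase:
  assumes "finite C" "C \<subseteq> {..<M} \<times> {..<M}" "Complete_Partial_Order.chain (\<le>) C"
  obtains T where "T \<subseteq> {..<2 * M}" "C \<subseteq> staircase M T"
proof -
  \<comment> \<open>\<open>F k\<close> is the first coordinate of the point of the path after \<open>k\<close> steps\<close>
  define F where "F k = Max ((\<lambda>(i, j). min i (k - j)) ` insert (0, 0) C)" for k
  have F0: "F 0 = 0"
    unfolding F_def using assms(1) by (intro Max_eqI) auto
  have F_mono: "F k \<le> F (Suc k)" for k
    unfolding F_def using assms(1) by (intro Max_image_mono) auto
  have F_Suc_le: "F (Suc k) \<le> Suc (F k)" for k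
  proof -
    have "F (Suc k) \<le> Max ((\<lambda>p. Suc (case p of (i, j) \<Rightarrow> min i (k - j))) ` insert (0, 0) C)"
      unfolding F_def using assms(1) by (intro Max_image_mono) auto
    also have "\<dots> = Suc (F k)"
      unfolding F_def using assms(1)
      by (simp add: mono_Max_commute[of Suc] mono_def image_image)
    finally show ?thesis .
  qed
  have F_step: "F (Suc k) = F k \<or> F (Suc k) = Suc (F k)" for k
    using F_mono[of k] F_Suc_le[of k] by linarith
  have F_on_C: "F (i + j) = i" if "(i, j) \<in> C" for i j
    unfolding F_def
  proof (rule Max_eqI)
    show "finite ((\<lambda>(i', j'). min i' (i + j - j')) ` insert (0, 0) C)"
      using assms(1) by simp
    show "i \<in> (\<lambda>(i', j'). min i' (i + j - j')) ` insert (0, 0) C"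
      using that by (intro image_eqI[of _ _ "(i, j)"]) simp_all
    fix y assume "y \<in> (\<lambda>(i', j'). min i' (i + j - j')) ` insert (0, 0) C"
    then obtain q where q: "q \<in> insert (0, 0) C" "y = (case q of (i', j') \<Rightarrow> min i' (i + j - j'))"
      by (rule imageE)
    obtain i' j' where "q = (i', j')" by (cases q)
    with q have p: "(i', j') \<in> insert (0, 0) C" "y = min i' (i + j - j')"
      by simp_all
    then have "(i', j') = (0, 0) \<or> (i, j) \<le> (i', j') \<or> (i', j') \<le> (i, j)"
      using that assms(3) unfolding chain_def by blast
    with p(2) show "y \<le> i" unfolding less_eq_prod_def by auto
  qed
  define T where "T = {k. k < 2 * M \<and> F (Suc k) = Suc (F k)}"
  have "C \<subseteq> staircase M T"
  proof
    fix p assume "p \<in> C"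
    moreover obtain i j where p: "p = (i, j)" by (cases p)
    ultimately have "i < M" "j < M" "F (i + j) = i"
      using assms(2) F_on_C by auto
    moreover have "card (T \<inter> {..<i + j}) = F (i + j)"
      unfolding T_def using \<open>i < M\<close> \<open>j < M\<close> by (intro card_up_steps[OF F0 F_step]) simp
    ultimately show "p \<in> staircase M T"
      unfolding staircase_def p by simp
  qed
  then show thesis by (rule that[rotated]) (auto simp: T_def)
qed

section \<open>Poisson counts\<close>

definition layer :: "(real \<times> real) set \<Rightarrow> int \<Rightarrow> (real \<times> int \<times> real) set" where
  "layer S y = {p. (fst p, snd (snd p)) \<in> S \<and> fst (snd p) = y}"

lemma closed_layer:
  assumes "closed S"
  shows "closed (layer S y)"
proof -
  have "layer S y = (\<lambda>p. (fst p, snd (snd p))) -` S \<inter> {p. fst (snd p) = y}"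
    unfolding layer_def by auto
  also have "closed \<dots>"
    by (intro closed_Int continuous_closed_vimage assms closed_Collect_eq continuous_intros)
  finally show ?thesis .
qed

lemma pp_bounded_layer:
  assumes "bounded S"
  shows "pp_bounded (layer S y)"
proof -
  obtain r where r: "\<And>p. p \<in> S \<Longrightarrow> norm p \<le> r"
    using assms unfolding bounded_iff by blast
  have "\<bar>fst p\<bar> \<le> r + \<bar>real_of_int y\<bar> \<and> \<bar>real_of_int (fst (snd p))\<bar> \<le> r + \<bar>real_of_int y\<bar>
      \<and> \<bar>snd (snd p)\<bar> \<le> r + \<bar>real_of_int y\<bar>" if "p \<in> layer S y" for p
  proof -
    have "(fst p, snd (snd p)) \<in> S" "fst (snd p) = y"
      using that unfolding layer_def by auto
    with r norm_fst_le[of "fst p" "snd (snd p)"] norm_snd_le[of "snd (snd p)" "fst p"]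
    show ?thesis by fastforce
  qed
  then show ?thesis unfolding pp_bounded_def by blast
qed

lemma Int_layer_eq_image_slice:
  "\<omega> \<inter> layer S y = (\<lambda>p. (fst p, y, snd p)) ` (slice \<omega> y \<inter> S)"
  unfolding layer_def slice_def by force

lemma card_slice_Int_eq:
  "card (slice \<omega> y \<inter> S) = card (\<omega> \<inter> layer S y)"
  unfolding Int_layer_eq_image_slice by (rule card_image[symmetric]) (auto intro: inj_onI)

lemma finite_slice_Int:
  assumes "\<omega> \<in> PPP_space" "bounded S"
  shows "finite (slice \<omega> y \<inter> S)"
proof -
  have "finite (\<omega> \<inter> layer S y)"
    using assms pp_bounded_layer unfolding PPP_space_def by blast
  then show ?thesis
    unfolding Int_layer_eq_image_slice by (rule finite_imageD) (auto intro: inj_onI)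
qed

lemma pp_intensity_layer_le:
  assumes "S \<in> sets borel"
  shows "pp_intensity (layer S y) \<le> 2 * emeasure lborel S"
proof -
  have "emeasure lborel {p. (fst p, y', snd p) \<in> layer S y \<and> 0 \<le> snd p}
      \<le> emeasure lborel S * indicator {y} y'" for y'
  proof (cases "y' = y")
    case True
    show ?thesis
      using assms by (simp add: True) (intro emeasure_mono, auto simp: layer_def)
  next
    case False
    then show ?thesis by (simp add: layer_def)
  qed
  then have "pp_intensity (layer S y)
      \<le> 2 * (\<integral>\<^sup>+y'. emeasure lborel S * indicator {y} y' \<partial>count_space UNIV)"
    unfolding pp_intensity_def by (intro mult_left_mono nn_integral_mono) auto
  then show ?thesis
    by (simp add: nn_integral_cmult_indicator)
qed

lemma exp_le_partial_sum_add:
  fixes \<mu> :: real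
  assumes "0 \<le> \<mu>"
  shows "exp \<mu> \<le> (\<Sum>k<m. \<mu> ^ k / fact k) + \<mu> ^ m / fact m * exp \<mu>"
proof -
  define f where "f k = \<mu> ^ k / fact k" for k
  have "f = (\<lambda>k. inverse (fact k) * \<mu> ^ k)"
    by (simp add: fun_eq_iff f_def divide_inverse)
  then have f_sums: "f sums exp \<mu>"
    using exp_converges[of \<mu>] by simp
  then have f_summable: "summable f" by (rule sums_summable)
  have f_shift_le: "f (j + m) \<le> f m * f j" for j
  proof -
    have "fact m * fact j \<le> (fact (j + m) :: nat)"
      by (rule dvd_imp_le) (use fact_fact_dvd_fact[of m j] in \<open>auto simp: add.commute\<close>)
    then have "(fact m * fact j :: real) \<le> fact (j + m)"
      by (metis of_nat_fact of_nat_le_iff of_nat_mult)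
    then have "\<mu> ^ (j + m) / fact (j + m) \<le> \<mu> ^ (j + m) / (fact m * fact j)"
      using assms by (intro divide_left_mono) auto
    then show ?thesis by (simp add: f_def power_add mult.commute)
  qed
  have "exp \<mu> = (\<Sum>j. f (j + m)) + (\<Sum>k<m. f k)"
    using f_sums suminf_split_initial_segment[OF f_summable] by (simp add: sums_iff)
  also have "(\<Sum>j. f (j + m)) \<le> (\<Sum>j. f m * f j)"
    using f_shift_le summable_ignore_initial_segment[OF f_summable] summable_mult[OF f_summable]
    by (intro suminf_le) auto
  also have "(\<Sum>j. f m * f j) = f m * exp \<mu>"
    using suminf_mult[OF f_summable, of "f m"] f_sums by (simp add: sums_iff)
  finally show ?thesis by (simp add: f_def add.commute)
qed

lemma power_div_fact_le:
  fixes \<mu> :: real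
  assumes "0 \<le> \<mu>" "0 < m"
  shows "\<mu> ^ m / fact m \<le> (exp 1 * \<mu> / m) ^ m"
proof -
  have "real m ^ m / fact m \<le> exp (real m)"
  proof -
    have "(\<lambda>k. real m ^ k / fact k) sums exp (real m)"
      using exp_converges[of "real m"] by (simp add: divide_inverse mult.commute)
    then show ?thesis
      using sum_le_suminf[of "\<lambda>k. real m ^ k / fact k" "{m}"] by (auto simp: sums_iff)
  qed
  have "\<mu> ^ m / fact m = (\<mu> / m) ^ m * (real m ^ m / fact m)"
    using assms by (simp add: power_divide)
  also have "\<dots> \<le> (\<mu> / m) ^ m * exp (real m)"
    using \<open>real m ^ m / fact m \<le> exp (real m)\<close> assms by (intro mult_left_mono) auto
  also have "exp (real m) = exp 1 ^ m"
    by (simp add: exp_of_nat_mult[symmetric])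
  also have "(\<mu> / m) ^ m * exp 1 ^ m = (exp 1 * \<mu> / m) ^ m"
    by (simp add: power_mult_distrib[symmetric] mult.commute)
  finally show ?thesis .
qed

lemma power_div_fact_le_half_power:
  fixes \<mu> :: real
  assumes "0 \<le> \<mu>" "6 * \<mu> \<le> m"
  shows "\<mu> ^ m / fact m \<le> (1 / 2) ^ m"
proof (cases "m = 0")
  case False
  have "\<mu> ^ m / fact m \<le> (exp 1 * \<mu> / m) ^ m"
    using False assms(1) by (intro power_div_fact_le) auto
  also have "\<dots> \<le> (1 / 2) ^ m"
  proof (intro power_mono)
    have "exp 1 * \<mu> \<le> 3 * \<mu>"
      using exp_le assms(1) by (intro mult_right_mono) auto
    then show "exp 1 * \<mu> / m \<le> 1 / 2"
      using False assms by (simp add: divide_le_eq)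
  qed (use assms(1) in auto)
  finally show ?thesis .
qed simp

lemma poisson_count_eq_sets:
  assumes "poisson_pp P" "B \<in> sets borel" "pp_bounded B"
  shows "{\<omega>\<in>space P. card (\<omega> \<inter> B) = k} \<in> sets P"
  using assms unfolding poisson_pp_def by (auto intro!: sigma_sets.Basic)

lemma poisson_count_ge_sets:
  assumes "poisson_pp P" "B \<in> sets borel" "pp_bounded B"
  shows "{\<omega>\<in>space P. m \<le> card (\<omega> \<inter> B)} \<in> sets P"
proof -
  have "{\<omega>\<in>space P. m \<le> card (\<omega> \<inter> B)} = space P - (\<Union>k<m. {\<omega>\<in>space P. card (\<omega> \<inter> B) = k})"
    by auto
  also have "\<dots> \<in> sets P"
    using poisson_count_eq_sets[OF assms] by auto
  finally show ?thesis .
qed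

lemma poisson_count_tail:
  assumes P: "poisson_pp P" and B: "B \<in> sets borel" "pp_bounded B"
  shows "measure P {\<omega>\<in>space P. m \<le> card (\<omega> \<inter> B)} \<le> enn2real (pp_intensity B) ^ m / fact m"
proof -
  interpret prob_space P
    using P unfolding poisson_pp_def by simp
  define \<mu> where "\<mu> = enn2real (pp_intensity B)"
  define N where "N k = {\<omega>\<in>space P. card (\<omega> \<inter> B) = k}" for k
  have N_sets: "N k \<in> sets P" for k
    unfolding N_def by (rule poisson_count_eq_sets[OF assms])
  have prob_N: "prob (N k) = \<mu> ^ k / fact k * exp (- \<mu>)" for k
    using P B unfolding poisson_pp_def N_def \<mu>_def by auto
  have "prob (\<Union>k<m. N k) = (\<Sum>k<m. prob (N k))"
    using N_sets by (intro finite_measure_finite_Union) (auto simp: disjoint_family_on_def N_def)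
  moreover have "{\<omega>\<in>space P. m \<le> card (\<omega> \<inter> B)} = space P - (\<Union>k<m. N k)"
    by (auto simp: N_def)
  ultimately have "prob {\<omega>\<in>space P. m \<le> card (\<omega> \<inter> B)} = 1 - exp (- \<mu>) * (\<Sum>k<m. \<mu> ^ k / fact k)"
    using N_sets by (simp add: prob_compl prob_N sum_distrib_left mult.commute)
  also have "\<dots> \<le> \<mu> ^ m / fact m"
    using exp_le_partial_sum_add[of \<mu> m] by (simp add: \<mu>_def exp_minus field_simps)
  finally show ?thesis by (simp add: \<mu>_def)
qed

section \<open>Grids of light-boxes\<close>

(* Clamped at M - 1 so that the upper end A + M h falls into the last cell. *)
definition grid_index :: "real \<Rightarrow> real \<Rightarrow> nat \<Rightarrow> real \<Rightarrow> nat" where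
  "grid_index A h M w = min (M - 1) (nat \<lfloor>(w - A) / h\<rfloor>)"

lemma grid_index_mono: "0 < h \<Longrightarrow> w \<le> w' \<Longrightarrow> grid_index A h M w \<le> grid_index A h M w'"
  unfolding grid_index_def by (intro min.mono order.refl nat_mono floor_mono divide_right_mono) auto

lemma grid_index_less: "0 < M \<Longrightarrow> grid_index A h M w < M"
  unfolding grid_index_def by auto

lemma grid_index_bounds:
  fixes A h w :: real
  assumes "0 < h" "0 < M" "A \<le> w" "w \<le> A + M * h"
  shows "A + grid_index A h M w * h \<le> w \<and> w \<le> A + (grid_index A h M w + 1) * h"
proof -
  define f where "f = nat \<lfloor>(w - A) / h\<rfloor>"
  have "real f = of_int \<lfloor>(w - A) / h\<rfloor>"
    unfolding f_def using assms by simp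
  then have "real f \<le> (w - A) / h" "(w - A) / h < real f + 1"
    by linarith+
  then have f: "real f * h \<le> w - A" "w - A < (real f + 1) * h"
    using assms(1) by (simp_all add: field_simps)
  show ?thesis
  proof (cases "f \<le> M - 1")
    case True
    then have "grid_index A h M w = f"
      unfolding grid_index_def f_def by auto
    with f show ?thesis by (auto simp: algebra_simps)
  next
    case False
    then have "grid_index A h M w = M - 1" "real (M - 1) \<le> real f"
      unfolding grid_index_def f_def by auto
    moreover have "real (M - 1) * h \<le> real f * h"
      using calculation(2) assms(1) by (intro mult_right_mono) simp_all
    ultimately show ?thesis
      using f assms by (simp add: of_nat_diff algebra_simps)
  qed
qed

locale light_grid =
  fixes A1 B1 A2 B2 :: real and M :: nat
  assumes A1_less_B1: "A1 < B1" and A2_less_B2: "A2 < B2" and M_pos: "0 < M"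
begin

definition h1 :: real where "h1 = (B1 - A1) / M"

definition h2 :: real where "h2 = (B2 - A2) / M"

lemma h_pos: "0 < h1" "0 < h2"
  using A1_less_B1 A2_less_B2 M_pos by (simp_all add: h1_def h2_def)

lemma B_eq: "B1 = A1 + M * h1" "B2 = A2 + M * h2"
  using M_pos by (simp_all add: h1_def h2_def)

definition cell :: "nat \<times> nat \<Rightarrow> (real \<times> real) set" where
  "cell c = light_box (A1 + real (fst c) * h1) (A1 + real (fst c + 1) * h1)
     (A2 + real (snd c) * h2) (A2 + real (snd c + 1) * h2)"

definition cell_index :: "real \<times> real \<Rightarrow> nat \<times> nat" where
  "cell_index p = (grid_index A1 h1 M (fst (light_coords p)), grid_index A2 h2 M (snd (light_coords p)))"

definition stair_region :: "nat set \<Rightarrow> (real \<times> real) set" where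
  "stair_region T = (\<Union>c\<in>staircase M T. cell c)"

lemma cell_index_mono: "light_coords p \<le> light_coords q \<Longrightarrow> cell_index p \<le> cell_index q"
  unfolding cell_index_def less_eq_prod_def using h_pos by (auto intro: grid_index_mono)

lemma cell_index_less: "cell_index p \<in> {..<M} \<times> {..<M}"
  using grid_index_less[OF M_pos] by (simp add: cell_index_def)

lemma mem_cell_cell_index:
  assumes "p \<in> light_box A1 B1 A2 B2"
  shows "p \<in> cell (cell_index p)"
  using assms B_eq grid_index_bounds[OF h_pos(1) M_pos, of A1 "fst (light_coords p)"]
    grid_index_bounds[OF h_pos(2) M_pos, of A2 "snd (light_coords p)"]
  unfolding cell_def cell_index_def light_box_def light_coords_def by (auto simp: add.commute)

lemma cell_subset_light_box:
  assumes "c \<in> {..<M} \<times> {..<M}"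
  shows "cell c \<subseteq> light_box A1 B1 A2 B2"
proof -
  have "real (fst c) + 1 \<le> M" "real (snd c) + 1 \<le> M"
    using assms by (auto simp flip: of_nat_Suc)
  then have "(real (fst c) + 1) * h1 \<le> M * h1" "(real (snd c) + 1) * h2 \<le> M * h2"
    using h_pos by (auto intro: mult_right_mono)
  moreover have "0 \<le> real (fst c) * h1" "0 \<le> real (snd c) * h2"
    using h_pos by auto
  ultimately show ?thesis
    unfolding cell_def using B_eq by (intro light_box_mono) (simp_all add: algebra_simps)
qed

lemma stair_region_subset: "stair_region T \<subseteq> light_box A1 B1 A2 B2"
  unfolding stair_region_def using cell_subset_light_box by (auto simp: staircase_def)

lemma bounded_stair_region: "bounded (stair_region T)"
  using bounded_light_box stair_region_subset by (rule bounded_subset)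

lemma closed_stair_region: "closed (stair_region T)"
  unfolding stair_region_def
  by (intro closed_UN finite_staircase) (simp add: cell_def closed_light_box)

lemma stair_region_borel [measurable]: "stair_region T \<in> sets borel"
  using closed_stair_region by (rule borel_closed)

lemma emeasure_stair_region_le:
  "emeasure lborel (stair_region T) \<le> ennreal ((B1 - A1) * (B2 - A2) / M)"
proof -
  have "emeasure lborel (stair_region T) \<le> (\<Sum>c\<in>staircase M T. emeasure lborel (cell c))"
    unfolding stair_region_def
    by (rule emeasure_subadditive_finite) (auto simp: finite_staircase cell_def)
  also have "\<dots> = of_nat (card (staircase M T)) * ennreal (h1 * h2 / 2)"
    using h_pos by (simp add: cell_def emeasure_light_box algebra_simps)
  also have "\<dots> \<le> of_nat (2 * M) * ennreal (h1 * h2 / 2)"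
  proof (rule mult_right_mono)
    show "of_nat (card (staircase M T)) \<le> (of_nat (2 * M) :: ennreal)"
      by (simp only: of_nat_le_iff card_staircase_le)
  qed simp
  also have "\<dots> = ennreal (M * h1 * h2)"
    using h_pos by (simp add: ennreal_of_nat_eq_real_of_nat ennreal_mult[symmetric])
  also have "M * h1 * h2 = (B1 - A1) * (B2 - A2) / M"
    using M_pos by (simp add: h1_def h2_def)
  finally show ?thesis .
qed

lemma light_path_subset_stair_region:
  assumes "light_path \<gamma>"
  obtains T where "T \<subseteq> {..<2 * M}" "light_box A1 B1 A2 B2 \<inter> \<gamma> ` {0..1} \<subseteq> stair_region T"
proof -
  let ?S = "light_box A1 B1 A2 B2 \<inter> \<gamma> ` {0..1}"
  have "Complete_Partial_Order.chain (\<le>) (cell_index ` ?S)"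
    using chain_light_coords_light_path[OF assms] cell_index_mono
    unfolding chain_def by blast
  moreover have "cell_index ` ?S \<subseteq> {..<M} \<times> {..<M}"
    using cell_index_less by blast
  moreover have "finite (cell_index ` ?S)"
    using calculation(2) by (rule finite_subset) simp
  ultimately obtain T where T: "T \<subseteq> {..<2 * M}" "cell_index ` ?S \<subseteq> staircase M T"
    using chain_subset_staircase by blast
  have "?S \<subseteq> stair_region T"
  proof
    fix p assume "p \<in> ?S"
    then have "p \<in> cell (cell_index p)" "cell_index p \<in> staircase M T"
      using mem_cell_cell_index T(2) by auto
    then show "p \<in> stair_region T"
      unfolding stair_region_def by blast
  qed
  with T(1) show thesis by (rule that)
qed

lemma Lup_le_card_stair_region:
  assumes "finite (A \<inter> light_box A1 B1 A2 B2)"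
  obtains T where "T \<subseteq> {..<2 * M}" "Lup (A \<inter> light_box A1 B1 A2 B2) \<le> card (A \<inter> stair_region T)"
proof -
  obtain \<gamma> where \<gamma>: "light_path \<gamma>" "Lup (A \<inter> light_box A1 B1 A2 B2) = card (A \<inter> light_box A1 B1 A2 B2 \<inter> \<gamma> ` {0..1})"
    using Lup_attained[OF assms] by blast
  obtain T where T: "T \<subseteq> {..<2 * M}" "light_box A1 B1 A2 B2 \<inter> \<gamma> ` {0..1} \<subseteq> stair_region T"
    using light_path_subset_stair_region[OF \<gamma>(1)] by blast
  have "finite (A \<inter> stair_region T)"
    using stair_region_subset by (intro finite_subset[OF _ assms]) blast
  then have "card (A \<inter> light_box A1 B1 A2 B2 \<inter> \<gamma> ` {0..1}) \<le> card (A \<inter> stair_region T)"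
    using T(2) by (intro card_mono) blast+
  with \<gamma>(2) show thesis using T(1) that by simp
qed

lemma Lup_slice_less:
  assumes "\<omega> \<in> PPP_space" and sparse: "\<And>T. T \<subseteq> {..<2 * M} \<Longrightarrow> card (\<omega> \<inter> layer (stair_region T) y) < m"
  shows "Lup (slice \<omega> y \<inter> light_box A1 B1 A2 B2) < m"
proof -
  obtain T where T: "T \<subseteq> {..<2 * M}"
    "Lup (slice \<omega> y \<inter> light_box A1 B1 A2 B2) \<le> card (slice \<omega> y \<inter> stair_region T)"
    using Lup_le_card_stair_region[OF finite_slice_Int[OF assms(1) bounded_light_box]] .
  then show ?thesis
    using sparse[OF T(1)] unfolding card_slice_Int_eq by linarith
qed

lemma enn2real_pp_intensity_stair_layer_le:
  "enn2real (pp_intensity (layer (stair_region T) y)) \<le> 2 * ((B1 - A1) * (B2 - A2) / M)"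
proof -
  have "pp_intensity (layer (stair_region T) y) \<le> 2 * ennreal ((B1 - A1) * (B2 - A2) / M)"
    by (rule order_trans[OF pp_intensity_layer_le[OF stair_region_borel]])
      (intro mult_left_mono emeasure_stair_region_le, simp)
  also have "\<dots> = ennreal (2 * ((B1 - A1) * (B2 - A2) / M))"
    using A1_less_B1 A2_less_B2 by (subst ennreal_mult) simp_all
  finally have "enn2real (pp_intensity (layer (stair_region T) y))
      \<le> enn2real (ennreal (2 * ((B1 - A1) * (B2 - A2) / M)))"
    by (rule enn2real_mono) simp
  then show ?thesis
    using A1_less_B1 A2_less_B2 by simp
qed

lemma layer_stair_region_borel: "layer (stair_region T) y \<in> sets borel"
  by (intro borel_closed closed_layer closed_stair_region)

lemma crowded_sets:
  assumes "poisson_pp P"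
  shows "{\<omega>\<in>space P. m \<le> card (\<omega> \<inter> layer (stair_region T) y)} \<in> sets P"
  using poisson_count_ge_sets[OF assms layer_stair_region_borel pp_bounded_layer[OF bounded_stair_region]] .

lemma prob_crowded_staircase_le:
  assumes P: "poisson_pp P" and dense: "12 * ((B1 - A1) * (B2 - A2)) \<le> real M * real m"
  shows "measure P (\<Union>T\<in>Pow {..<2 * M}. {\<omega>\<in>space P. m \<le> card (\<omega> \<inter> layer (stair_region T) y)})
    \<le> 4 ^ M / 2 ^ m"
proof -
  interpret prob_space P
    using P unfolding poisson_pp_def by simp
  have crowded_prob: "prob {\<omega>\<in>space P. m \<le> card (\<omega> \<inter> layer (stair_region T) y)} \<le> (1 / 2) ^ m" for T
  proof -
    define \<mu> where "\<mu> = enn2real (pp_intensity (layer (stair_region T) y))"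
    have "\<mu> \<le> 2 * ((B1 - A1) * (B2 - A2) / M)"
      unfolding \<mu>_def by (rule enn2real_pp_intensity_stair_layer_le)
    then have "\<mu> * M \<le> 2 * ((B1 - A1) * (B2 - A2))"
      using M_pos by (simp add: field_simps)
    then have "real M * (6 * \<mu>) \<le> real M * real m"
      using dense by (simp only: mult_ac)
    then have "6 * \<mu> \<le> m"
      using M_pos by simp
    then have "\<mu> ^ m / fact m \<le> (1 / 2) ^ m"
      by (intro power_div_fact_le_half_power) (simp_all add: \<mu>_def)
    with poisson_count_tail[OF P layer_stair_region_borel[of T y] pp_bounded_layer[OF bounded_stair_region], of m]
    show ?thesis
      unfolding \<mu>_def by linarith
  qed
  have "prob (\<Union>T\<in>Pow {..<2 * M}. {\<omega>\<in>space P. m \<le> card (\<omega> \<inter> layer (stair_region T) y)})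
      \<le> (\<Sum>T\<in>Pow {..<2 * M}. prob {\<omega>\<in>space P. m \<le> card (\<omega> \<inter> layer (stair_region T) y)})"
    using crowded_sets[OF P] by (intro finite_measure_subadditive_finite) auto
  also have "\<dots> \<le> (\<Sum>T\<in>Pow {..<2 * M}. (1 / 2) ^ m)"
    using crowded_prob by (intro sum_mono)
  also have "\<dots> = 4 ^ M / 2 ^ m"
    by (simp add: card_Pow power_mult power_divide)
  finally show ?thesis .
qed


lemma prob_crowded_layers_le:
  assumes P: "poisson_pp P" and dense: "12 * ((B1 - A1) * (B2 - A2)) \<le> real M * real m"
  shows "measure P (\<Union>y\<in>{- int k..int k}. \<Union>T\<in>Pow {..<2 * M}.
      {\<omega>\<in>space P. m \<le> card (\<omega> \<inter> layer (stair_region T) y)}) \<le> (2 * real k + 1) * (4 ^ M / 2 ^ m)"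
proof -
  interpret prob_space P
    using P unfolding poisson_pp_def by simp
  have "prob (\<Union>y\<in>{- int k..int k}. \<Union>T\<in>Pow {..<2 * M}.
      {\<omega>\<in>space P. m \<le> card (\<omega> \<inter> layer (stair_region T) y)})
    \<le> (\<Sum>y\<in>{- int k..int k}. prob (\<Union>T\<in>Pow {..<2 * M}.
      {\<omega>\<in>space P. m \<le> card (\<omega> \<inter> layer (stair_region T) y)}))"
    using crowded_sets[OF P]
    by (auto intro!: finite_measure_subadditive_finite sets.finite_UN simp del: Pow_iff)
  also have "\<dots> \<le> (\<Sum>y\<in>{- int k..int k}. 4 ^ M / 2 ^ m)"
    using prob_crowded_staircase_le[OF P dense] by (intro sum_mono)
  finally show ?thesis
    by simp
qed

end

section \<open>Borel-Cantelli and approximation by rational light-boxes\<close>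

lemma summable_Suc_times_power:
  fixes q :: real
  assumes "0 \<le> q" "q < 1"
  shows "summable (\<lambda>n. (real n + 1) * q ^ n)"
proof -
  have "summable (\<lambda>n. diffs (\<lambda>_. 1::real) n * q ^ n)"
    by (rule termdiff_converges[where K = 1]) (use assms in auto)
  then show ?thesis by (simp add: diffs_def add.commute)
qed

lemma crowding_term_le:
  fixes s :: real
  assumes "0 \<le> s"
  shows "4 ^ (nat \<lceil>real n * s\<rceil> + 1) / 2 ^ nat \<lceil>16 * real n * s\<rceil> \<le> 16 * (2 powr (- 14 * s)) ^ n"
proof -
  have four_div: "(4::real) ^ K / 2 ^ J = 2 powr (2 * real K - real J)" for K J
  proof -
    have "(2::real) powr (2 * real K) = 4 ^ K"
      using powr_realpow[of 2 "2 * K"] by (simp add: power_mult)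
    then show ?thesis by (simp add: powr_diff powr_realpow)
  qed
  have "real (nat \<lceil>real n * s\<rceil>) \<le> real n * s + 1"
    using assms by simp
  moreover have "16 * real n * s \<le> real (nat \<lceil>16 * real n * s\<rceil>)"
    by (rule real_nat_ceiling_ge)
  ultimately have "4 ^ (nat \<lceil>real n * s\<rceil> + 1) / 2 ^ nat \<lceil>16 * real n * s\<rceil>
      \<le> (2::real) powr (4 + (- 14 * s) * real n)"
    unfolding four_div by (intro powr_mono) (simp_all add: algebra_simps)
  also have "\<dots> = 2 powr 4 * (2 powr (- 14 * s)) powr real n"
    by (simp only: powr_add powr_powr)
  also have "\<dots> = 16 * (2 powr (- 14 * s)) ^ n"
    by (simp add: powr_realpow)
  finally show ?thesis .
qed

lemma summable_crowding_bound:
  fixes s :: real and Y :: nat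
  assumes "0 < s"
  shows "summable (\<lambda>n. (2 * real n * real Y + 1) * (4 ^ (nat \<lceil>real n * s\<rceil> + 1) / 2 ^ nat \<lceil>16 * real n * s\<rceil>))"
proof -
  define q where "q = (2::real) powr (- 14 * s)"
  have q: "0 \<le> q" "q < 1"
    unfolding q_def using assms powr_less_mono[of "- 14 * s" 0 2] by auto
  have "norm ((2 * real n * real Y + 1) * (4 ^ (nat \<lceil>real n * s\<rceil> + 1) / 2 ^ nat \<lceil>16 * real n * s\<rceil>))
      \<le> (16 * (2 * real Y + 1)) * ((real n + 1) * q ^ n)" for n
  proof -
    have "(2 * real n * real Y + 1) * (4 ^ (nat \<lceil>real n * s\<rceil> + 1) / 2 ^ nat \<lceil>16 * real n * s\<rceil>)
        \<le> ((2 * real Y + 1) * (real n + 1)) * (16 * q ^ n)"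
      using crowding_term_le[of s n] assms q unfolding q_def[symmetric]
      by (intro mult_mono) (simp_all add: algebra_simps)
    then show ?thesis by (simp add: mult_ac)
  qed
  then show ?thesis
    by (intro summable_comparison_test[OF _ summable_mult[OF summable_Suc_times_power[OF q]]]) auto
qed

lemma dilated_grid_density:
  fixes a b c d s :: real
  assumes "0 \<le> s" "s * s = (b - a) * (d - c)"
  shows "12 * ((n * b - n * a) * (n * d - n * c)) \<le> real (nat \<lceil>real n * s\<rceil> + 1) * real (nat \<lceil>16 * real n * s\<rceil>)"
proof -
  have "(n * b - n * a) * (n * d - n * c) = (n * s) * (n * s)"
    unfolding mult.assoc mult.left_commute[of s] assms(2) by (simp add: algebra_simps)
  moreover have "n * s \<le> real (nat \<lceil>real n * s\<rceil> + 1)" "12 * (n * s) \<le> real (nat \<lceil>16 * real n * s\<rceil>)"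
    unfolding of_nat_add of_nat_1
    using assms(1) real_nat_ceiling_ge[of "real n * s"] real_nat_ceiling_ge[of "16 * real n * s"]
      mult_nonneg_nonneg[of "real n" s] by linarith+
  moreover have "(n * s) * (12 * (n * s)) \<le> real (nat \<lceil>real n * s\<rceil> + 1) * real (nat \<lceil>16 * real n * s\<rceil>)"
    using assms(1) by (intro mult_mono calculation(2,3) of_nat_0_le_iff) simp
  ultimately show ?thesis
    by (simp add: mult_ac)
qed

definition sparse_light_box :: "(real \<times> int \<times> real) set \<Rightarrow> real \<Rightarrow> real \<Rightarrow> real \<Rightarrow> real \<Rightarrow> real \<Rightarrow> bool" where
  "sparse_light_box \<omega> a b c d Y \<longleftrightarrow> (\<forall>\<^sub>F n in sequentially. \<forall>y::int. \<bar>real_of_int y\<bar> \<le> real n * Y \<longrightarrow>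
     real (Lup (slice \<omega> y \<inter> light_box (real n * a) (real n * b) (real n * c) (real n * d))) / real n
       \<le> 16 * sqrt ((b - a) * (d - c)))"

lemma AE_sparse_light_box:
  fixes a b c d :: real and Y :: nat
  assumes P: "poisson_pp P" and ab: "a < b" and cd: "c < d"
  shows "AE \<omega> in P. sparse_light_box \<omega> a b c d Y"
proof -
  interpret prob_space P
    using P unfolding poisson_pp_def by simp
  define s where "s = sqrt ((b - a) * (d - c))"
  have s_pos: "0 < s"
    using ab cd by (simp add: s_def)
  define M where "M n = nat \<lceil>real n * s\<rceil> + 1" for n :: nat
  define m where "m n = nat \<lceil>16 * real n * s\<rceil>" for n :: nat
  define region where "region n = light_grid.stair_region (n * a) (n * b) (n * c) (n * d) (M n)" for n :: nat
  define crowded where "crowded n = (if n = 0 then {} else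
    \<Union>y\<in>{- int (n * Y)..int (n * Y)}. \<Union>T\<in>Pow {..<2 * M n}. {\<omega>\<in>space P. m n \<le> card (\<omega> \<inter> layer (region n T) y)})"
    for n :: nat
  have grid: "light_grid (n * a) (n * b) (n * c) (n * d) (M n)" if "0 < n" for n
    unfolding light_grid_def M_def using that ab cd by simp
  have crowded_sets: "crowded n \<in> events" for n
    unfolding crowded_def region_def using light_grid.crowded_sets[OF grid P]
    by (auto intro!: sets.finite_UN simp del: Pow_iff)
  have prob_crowded: "prob (crowded n) \<le> (2 * real n * real Y + 1) * (4 ^ M n / 2 ^ m n)" for n
  proof (cases "n = 0")
    case False
    have "12 * ((n * b - n * a) * (n * d - n * c)) \<le> real (M n) * real (m n)"
      unfolding M_def m_def using s_pos ab cd by (intro dilated_grid_density) (simp_all add: s_def)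
    then show ?thesis
      unfolding crowded_def region_def
      using light_grid.prob_crowded_layers_le[OF grid P, of n "m n" "n * Y"] False by (simp add: mult.assoc)
  qed (simp add: crowded_def)
  have "summable (\<lambda>n. (2 * real n * real Y + 1) * (4 ^ M n / 2 ^ m n))"
    unfolding M_def m_def by (rule summable_crowding_bound[OF s_pos])
  then have "summable (\<lambda>n. prob (crowded n))"
    by (rule summable_comparison_test') (use prob_crowded in simp)
  then have "AE \<omega> in P. \<forall>\<^sub>F n in sequentially. \<omega> \<in> space P - crowded n"
    by (intro borel_cantelli_AE1 crowded_sets) (simp_all add: emeasure_eq_measure)
  then show ?thesis
    using AE_space unfolding sparse_light_box_def
  proof eventually_elim
    case (elim \<omega>)
    then have \<omega>: "\<omega> \<in> PPP_space"
      using P unfolding poisson_pp_def by simp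
    show ?case
      using elim(1) eventually_gt_at_top[of 0]
    proof eventually_elim
      case (elim n)
      show ?case
      proof (intro allI impI)
        fix y :: int assume "\<bar>real_of_int y\<bar> \<le> real n * real Y"
        then have "real_of_int \<bar>y\<bar> \<le> real_of_int (int (n * Y))"
          by simp
        then have "y \<in> {- int (n * Y)..int (n * Y)}"
          by (simp only: of_int_le_iff) auto
        then have "card (\<omega> \<inter> layer (region n T) y) < m n" if "T \<subseteq> {..<2 * M n}" for T
          using elim that unfolding crowded_def by (auto simp: not_le)
        then have "Lup (slice \<omega> y \<inter> light_box (n * a) (n * b) (n * c) (n * d)) < m n"
          using light_grid.Lup_slice_less[OF grid[OF elim(2)] \<omega>] unfolding region_def by blast
        then have "real (Lup (slice \<omega> y \<inter> light_box (n * a) (n * b) (n * c) (n * d))) < 16 * real n * s"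
          unfolding m_def by (metis not_le nat_ceiling_le_eq)
        then show "real (Lup (slice \<omega> y \<inter> light_box (n * a) (n * b) (n * c) (n * d))) / n
            \<le> 16 * sqrt ((b - a) * (d - c))"
          using elim(2) unfolding s_def by (simp add: divide_le_eq mult_ac)
      qed
    qed
  qed
qed

lemma limsup_SUP_le:
  fixes f :: "nat \<Rightarrow> 'a \<Rightarrow> real"
  assumes "\<And>n. S n \<noteq> {}" and "\<forall>\<^sub>F n in sequentially. \<forall>y\<in>S n. f n y \<le> C"
  shows "limsup (\<lambda>n. ereal (SUP y\<in>S n. f n y)) \<le> ereal C"
  using assms(2) by (intro Limsup_bounded) (auto elim!: eventually_mono intro!: cSUP_least assms(1))

lemma limsup_Lup_dilate_le:
  fixes a b c d Y Y' :: real
  assumes "\<omega> \<in> PPP_space" and "0 \<le> Y" "Y \<le> Y'"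
    and cover: "\<And>n::nat. dilate n R \<subseteq> light_box (n * a) (n * b) (n * c) (n * d)"
    and "sparse_light_box \<omega> a b c d Y'"
  shows "limsup (\<lambda>n::nat. ereal (SUP y\<in>{y::int. \<bar>real_of_int y\<bar> \<le> real n * Y}.
      real (Lup (slice \<omega> y \<inter> dilate (real n) R)) / real n)) \<le> ereal (16 * sqrt ((b - a) * (d - c)))"
proof (rule limsup_SUP_le)
  show "{y::int. \<bar>real_of_int y\<bar> \<le> real n * Y} \<noteq> {}" for n
    using assms(2) by (auto intro!: exI[of _ 0])
  show "\<forall>\<^sub>F n in sequentially. \<forall>y\<in>{y::int. \<bar>real_of_int y\<bar> \<le> real n * Y}.
      real (Lup (slice \<omega> y \<inter> dilate (real n) R)) / real n \<le> 16 * sqrt ((b - a) * (d - c))"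
    using assms(5) unfolding sparse_light_box_def
  proof eventually_elim
    case (elim n)
    show ?case
    proof
      fix y :: int assume "y \<in> {y. \<bar>real_of_int y\<bar> \<le> real n * Y}"
      moreover have "real n * Y \<le> real n * Y'"
        using assms(3) by (intro mult_left_mono) simp_all
      ultimately have "\<bar>real_of_int y\<bar> \<le> real n * Y'"
        by simp
      moreover have "Lup (slice \<omega> y \<inter> dilate n R) \<le> Lup (slice \<omega> y \<inter> light_box (n * a) (n * b) (n * c) (n * d))"
        using cover by (intro Lup_mono finite_slice_Int[OF assms(1) bounded_light_box]) auto
      then have "real (Lup (slice \<omega> y \<inter> dilate n R)) / n
          \<le> real (Lup (slice \<omega> y \<inter> light_box (n * a) (n * b) (n * c) (n * d))) / n"
        by (intro divide_right_mono) simp_all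
      ultimately show "real (Lup (slice \<omega> y \<inter> dilate (real n) R)) / real n \<le> 16 * sqrt ((b - a) * (d - c))"
        using elim by fastforce
    qed
  qed
qed

lemma limsup_Lup_dilate_light_rect_le:
  assumes "\<omega> \<in> PPP_space" "light_rect R" "0 < Y"
    and sparse: "\<forall>a b c d :: rat. \<forall>Y :: nat. a < b \<longrightarrow> c < d \<longrightarrow>
      sparse_light_box \<omega> (of_rat a) (of_rat b) (of_rat c) (of_rat d) Y"
  shows "limsup (\<lambda>n::nat. ereal (SUP y\<in>{y::int. \<bar>real_of_int y\<bar> \<le> real n * Y}.
      real (Lup (slice \<omega> y \<inter> dilate (real n) R)) / real n)) \<le> ereal (32 * sqrt (measure lborel R))"
proof -
  obtain a b c d :: rat where "a < b" "c < d"
    and cover: "\<And>n. 0 \<le> n \<Longrightarrow> dilate n R \<subseteq> light_box (n * of_rat a) (n * of_rat b) (n * of_rat c) (n * of_rat d)"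
    and area: "sqrt ((of_rat b - of_rat a) * (of_rat d - of_rat c)) \<le> 2 * sqrt (measure lborel R)"
    using light_rect_rational_cover[OF assms(2)] by blast
  have "limsup (\<lambda>n::nat. ereal (SUP y\<in>{y::int. \<bar>real_of_int y\<bar> \<le> real n * Y}.
      real (Lup (slice \<omega> y \<inter> dilate (real n) R)) / real n))
    \<le> ereal (16 * sqrt ((of_rat b - of_rat a) * (of_rat d - of_rat c)))"
  proof (rule limsup_Lup_dilate_le[OF assms(1) _ real_nat_ceiling_ge])
    show "sparse_light_box \<omega> (of_rat a) (of_rat b) (of_rat c) (of_rat d) (real (nat \<lceil>Y\<rceil>))"
      using sparse \<open>a < b\<close> \<open>c < d\<close> by blast
  qed (use assms(3) cover in auto)
  also have "\<dots> \<le> ereal (32 * sqrt (measure lborel R))"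
    using area by simp
  finally show ?thesis .
qed

theorem lemma5p4:
  fixes P :: "(real \<times> int \<times> real) set measure"
  assumes "poisson_pp P"
  shows "\<exists>c>0. AE \<omega> in P. \<forall>R (Y::real). light_rect R \<longrightarrow> Y > 0 \<longrightarrow>
    limsup (\<lambda>n::nat. ereal (SUP y\<in>{y::int. \<bar>real_of_int y\<bar> \<le> real n * Y}.
        real (Lup (slice \<omega> y \<inter> dilate (real n) R)) / real n))
      \<le> ereal (c * sqrt (measure lborel R))"
proof (intro exI[of _ 32] conjI)
  have "AE \<omega> in P. \<forall>a b c d :: rat. \<forall>Y :: nat. a < b \<longrightarrow> c < d \<longrightarrow>
      sparse_light_box \<omega> (of_rat a) (of_rat b) (of_rat c) (of_rat d) Y"
    by (simp only: AE_all_countable) (intro allI AE_impI AE_sparse_light_box[OF assms], simp_all add: of_rat_less)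
  then show "AE \<omega> in P. \<forall>R (Y::real). light_rect R \<longrightarrow> Y > 0 \<longrightarrow>
    limsup (\<lambda>n::nat. ereal (SUP y\<in>{y::int. \<bar>real_of_int y\<bar> \<le> real n * Y}.
        real (Lup (slice \<omega> y \<inter> dilate (real n) R)) / real n))
      \<le> ereal (32 * sqrt (measure lborel R))"
    using AE_space
  proof eventually_elim
    case (elim \<omega>)
    then have "\<omega> \<in> PPP_space"
      using assms unfolding poisson_pp_def by simp
    with elim(1) show ?case
      by (blast intro: limsup_Lup_dilate_light_rect_le)
  qed
qed simp

end
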